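(* Let $(A,\mu,\alpha,\beta)$ be a BiHom-Novikov algebra and let $\tilde\alpha,\tilde\beta:A\to A$ be two morphisms of BiHom-Novikov algebras (from $A$ to itself) such that any two of the maps $\alpha,\beta,\tilde\alpha,\tilde\beta$ commute. Then $(A,\mu\circ(\tilde\alpha\otimes\tilde\beta),\alpha\circ\tilde\alpha,\beta\circ\tilde\beta)$ is also a BiHom-Novikov algebra.
   Context: Work over a field. A BiHom-Novikov algebra is a 4-tuple $(A,\mu,\alpha,\beta)$ with $\mu:A\otimes A\to A$ (written $x\cdot y$) and commuting linear maps $\alpha,\beta:A\to A$ such that for all $x,y,z\in A$: $\alpha(x\cdot y)=\alpha(x)\cdot\alpha(y)$, $\beta(x\cdot y)=\beta(x)\cdot\beta(y)$, $(\beta(x)\cdot\alpha(y))\cdot\beta(z)-\alpha\beta(x)\cdot(\alpha(y)\cdot z)=(\beta(y)\cdot\alpha(x))\cdot\beta(z)-\alpha\beta(y)\cdot(\alpha(x)\cdot z)$, and $(x\cdot\beta(y))\cdot\alpha\beta(z)=(x\cdot\beta(z))\cdot\alpha\beta(y)$. A morphism $f:(A,\mu_A,\alpha_A,\beta_A)\to(B,\mu_B,\alpha_B,\beta_B)$ of BiHom-Novikov algebras is a linear map with $\alpha_B f=f\alpha_A$, $\beta_B f=f\beta_A$ and $f\circ\mu_A=\mu_B\circ(f\otimes f)$. *)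

theory Defs
  imports Complex_Main
begin

text \<open>A vector space over a field 'k with carrier type 'a and scalar multiplication sc.
  The multiplication mu is bilinear (mu corresponds to a linear map A tensor A to A).\<close>

definition bilinear_map :: "('k::field \<Rightarrow> 'a::ab_group_add \<Rightarrow> 'a) \<Rightarrow> ('a \<Rightarrow> 'a \<Rightarrow> 'a) \<Rightarrow> bool" where
  "bilinear_map sc mu \<longleftrightarrow> (\<forall>x. Vector_Spaces.linear sc sc (mu x)) \<and> (\<forall>y. Vector_Spaces.linear sc sc (\<lambda>x. mu x y))"

definition BiHom_Novikov :: "('k::field \<Rightarrow> 'a::ab_group_add \<Rightarrow> 'a) \<Rightarrow> ('a \<Rightarrow> 'a \<Rightarrow> 'a) \<Rightarrow> ('a \<Rightarrow> 'a) \<Rightarrow> ('a \<Rightarrow> 'a) \<Rightarrow> bool" where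
  "BiHom_Novikov sc mu \<alpha> \<beta> \<longleftrightarrow>
     vector_space sc \<and> bilinear_map sc mu \<and>
     Vector_Spaces.linear sc sc \<alpha> \<and> Vector_Spaces.linear sc sc \<beta> \<and>
     \<alpha> \<circ> \<beta> = \<beta> \<circ> \<alpha> \<and>
     (\<forall>x y. \<alpha> (mu x y) = mu (\<alpha> x) (\<alpha> y)) \<and>
     (\<forall>x y. \<beta> (mu x y) = mu (\<beta> x) (\<beta> y)) \<and>
     (\<forall>x y z. mu (mu (\<beta> x) (\<alpha> y)) (\<beta> z) - mu (\<alpha> (\<beta> x)) (mu (\<alpha> y) z)
             = mu (mu (\<beta> y) (\<alpha> x)) (\<beta> z) - mu (\<alpha> (\<beta> y)) (mu (\<alpha> x) z)) \<and>
     (\<forall>x y z. mu (mu x (\<beta> y)) (\<alpha> (\<beta> z)) = mu (mu x (\<beta> z)) (\<alpha> (\<beta> y)))"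

definition BiHom_Novikov_morphism ::
  "('k::field \<Rightarrow> 'a::ab_group_add \<Rightarrow> 'a) \<Rightarrow> ('a \<Rightarrow> 'a \<Rightarrow> 'a) \<Rightarrow> ('a \<Rightarrow> 'a) \<Rightarrow> ('a \<Rightarrow> 'a) \<Rightarrow>
   ('k \<Rightarrow> 'b::ab_group_add \<Rightarrow> 'b) \<Rightarrow> ('b \<Rightarrow> 'b \<Rightarrow> 'b) \<Rightarrow> ('b \<Rightarrow> 'b) \<Rightarrow> ('b \<Rightarrow> 'b) \<Rightarrow>
   ('a \<Rightarrow> 'b) \<Rightarrow> bool" where
  "BiHom_Novikov_morphism scA muA alA beA scB muB alB beB f \<longleftrightarrow>
     Vector_Spaces.linear scA scB f \<and> alB \<circ> f = f \<circ> alA \<and> beB \<circ> f = f \<circ> beA \<and>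
     (\<forall>x y. f (muA x y) = muB (f x) (f y))"

end

theory Submission
  imports Defs
begin

text \<open>Both twisting maps are multiplicative and commute with the structure maps, so they can be
  pushed through every product. Each identity of the twisted algebra then becomes the corresponding
  identity of the original one, instantiated at suitable images of x, y, z under the twisting maps.\<close>

definition multiplicative :: "('a \<Rightarrow> 'a \<Rightarrow> 'a) \<Rightarrow> ('a \<Rightarrow> 'a) \<Rightarrow> bool" where
  "multiplicative mu f \<longleftrightarrow> (\<forall>x y. f (mu x y) = mu (f x) (f y))"

definition bihom_left_symmetric :: "('a::ab_group_add \<Rightarrow> 'a \<Rightarrow> 'a) \<Rightarrow> ('a \<Rightarrow> 'a) \<Rightarrow> ('a \<Rightarrow> 'a) \<Rightarrow> bool" where
  "bihom_left_symmetric mu \<alpha> \<beta> \<longleftrightarrow>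
     (\<forall>x y z. mu (mu (\<beta> x) (\<alpha> y)) (\<beta> z) - mu (\<alpha> (\<beta> x)) (mu (\<alpha> y) z)
             = mu (mu (\<beta> y) (\<alpha> x)) (\<beta> z) - mu (\<alpha> (\<beta> y)) (mu (\<alpha> x) z))"

definition bihom_right_commutative :: "('a \<Rightarrow> 'a \<Rightarrow> 'a) \<Rightarrow> ('a \<Rightarrow> 'a) \<Rightarrow> ('a \<Rightarrow> 'a) \<Rightarrow> bool" where
  "bihom_right_commutative mu \<alpha> \<beta> \<longleftrightarrow>
     (\<forall>x y z. mu (mu x (\<beta> y)) (\<alpha> (\<beta> z)) = mu (mu x (\<beta> z)) (\<alpha> (\<beta> y)))"

lemma BiHom_Novikov_iff:
  "BiHom_Novikov sc mu \<alpha> \<beta> \<longleftrightarrow>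
     vector_space sc \<and> bilinear_map sc mu \<and>
     Vector_Spaces.linear sc sc \<alpha> \<and> Vector_Spaces.linear sc sc \<beta> \<and> \<alpha> \<circ> \<beta> = \<beta> \<circ> \<alpha> \<and>
     multiplicative mu \<alpha> \<and> multiplicative mu \<beta> \<and>
     bihom_left_symmetric mu \<alpha> \<beta> \<and> bihom_right_commutative mu \<alpha> \<beta>"
  unfolding BiHom_Novikov_def multiplicative_def bihom_left_symmetric_def
    bihom_right_commutative_def ..

lemma BiHom_Novikov_morphism_endo_iff:
  "BiHom_Novikov_morphism sc mu \<alpha> \<beta> sc mu \<alpha> \<beta> f \<longleftrightarrow>
     Vector_Spaces.linear sc sc f \<and> \<alpha> \<circ> f = f \<circ> \<alpha> \<and> \<beta> \<circ> f = f \<circ> \<beta> \<and> multiplicative mu f"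
  unfolding BiHom_Novikov_morphism_def multiplicative_def ..

lemma bilinear_map_twist:
  assumes "bilinear_map sc mu"
    and "Vector_Spaces.linear sc sc f" and "Vector_Spaces.linear sc sc g"
  shows "bilinear_map sc (\<lambda>x y. mu (f x) (g y))"
  unfolding bilinear_map_def
proof safe
  fix x
  have "Vector_Spaces.linear sc sc (mu (f x) \<circ> g)"
    using assms unfolding bilinear_map_def by (blast intro: Vector_Spaces.linear_compose)
  then show "Vector_Spaces.linear sc sc (\<lambda>y. mu (f x) (g y))"
    by (simp add: comp_def)
next
  fix y
  have "Vector_Spaces.linear sc sc ((\<lambda>x. mu x (g y)) \<circ> f)"
    using assms unfolding bilinear_map_def by (blast intro: Vector_Spaces.linear_compose)
  then show "Vector_Spaces.linear sc sc (\<lambda>x. mu (f x) (g y))"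
    by (simp add: comp_def)
qed

lemma multiplicative_comp:
  "multiplicative mu h \<Longrightarrow> multiplicative mu k \<Longrightarrow> multiplicative mu (h \<circ> k)"
  unfolding multiplicative_def by simp

lemma multiplicative_twist:
  assumes "multiplicative mu h" and "h \<circ> f = f \<circ> h" and "h \<circ> g = g \<circ> h"
  shows "multiplicative (\<lambda>x y. mu (f x) (g y)) h"
  using assms unfolding multiplicative_def by (metis comp_apply)

lemma comp_commute_of_pairwise_commute:
  assumes "a \<circ> b = b \<circ> a" and "a \<circ> b' = b' \<circ> a" and "b \<circ> a' = a' \<circ> b"
    and "b' \<circ> a' = a' \<circ> b'"
  shows "(a \<circ> a') \<circ> (b \<circ> b') = (b \<circ> b') \<circ> (a \<circ> a')"
  using assms by (metis comp_assoc)

context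
  fixes mu :: "'a::ab_group_add \<Rightarrow> 'a \<Rightarrow> 'a" and \<alpha> \<beta> \<alpha>' \<beta>' :: "'a \<Rightarrow> 'a"
  assumes mult: "multiplicative mu \<alpha>'" "multiplicative mu \<beta>'"
    and comm: "\<alpha> \<circ> \<alpha>' = \<alpha>' \<circ> \<alpha>" "\<alpha> \<circ> \<beta>' = \<beta>' \<circ> \<alpha>" "\<beta> \<circ> \<alpha>' = \<alpha>' \<circ> \<beta>"
      "\<beta> \<circ> \<beta>' = \<beta>' \<circ> \<beta>" "\<alpha>' \<circ> \<beta>' = \<beta>' \<circ> \<alpha>'" "\<alpha> \<circ> \<beta> = \<beta> \<circ> \<alpha>"
begin

private lemma twist_simps:
  "\<alpha>' (mu x y) = mu (\<alpha>' x) (\<alpha>' y)" "\<beta>' (mu x y) = mu (\<beta>' x) (\<beta>' y)"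
  "\<alpha>' (\<alpha> x) = \<alpha> (\<alpha>' x)" "\<beta>' (\<alpha> x) = \<alpha> (\<beta>' x)" "\<alpha>' (\<beta> x) = \<beta> (\<alpha>' x)"
  "\<beta>' (\<beta> x) = \<beta> (\<beta>' x)" "\<beta>' (\<alpha>' x) = \<alpha>' (\<beta>' x)" "\<beta> (\<alpha> x) = \<alpha> (\<beta> x)"
  using mult comm unfolding multiplicative_def by (metis comp_apply)+

lemma bihom_left_symmetric_twist:
  assumes "bihom_left_symmetric mu \<alpha> \<beta>"
  shows "bihom_left_symmetric (\<lambda>x y. mu (\<alpha>' x) (\<beta>' y)) (\<alpha> \<circ> \<alpha>') (\<beta> \<circ> \<beta>')"
  unfolding bihom_left_symmetric_def
proof (intro allI)
  fix x y z
  show "mu (\<alpha>' (mu (\<alpha>' ((\<beta> \<circ> \<beta>') x)) (\<beta>' ((\<alpha> \<circ> \<alpha>') y)))) (\<beta>' ((\<beta> \<circ> \<beta>') z)) -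
        mu (\<alpha>' ((\<alpha> \<circ> \<alpha>') ((\<beta> \<circ> \<beta>') x))) (\<beta>' (mu (\<alpha>' ((\<alpha> \<circ> \<alpha>') y)) (\<beta>' z))) =
        mu (\<alpha>' (mu (\<alpha>' ((\<beta> \<circ> \<beta>') y)) (\<beta>' ((\<alpha> \<circ> \<alpha>') x)))) (\<beta>' ((\<beta> \<circ> \<beta>') z)) -
        mu (\<alpha>' ((\<alpha> \<circ> \<alpha>') ((\<beta> \<circ> \<beta>') y))) (\<beta>' (mu (\<alpha>' ((\<alpha> \<circ> \<alpha>') x)) (\<beta>' z)))"
    using assms[unfolded bihom_left_symmetric_def, rule_format,
        of "\<alpha>' (\<alpha>' (\<beta>' x))" "\<alpha>' (\<alpha>' (\<beta>' y))" "\<beta>' (\<beta>' z)"]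
    by (simp add: twist_simps)
qed

lemma bihom_right_commutative_twist:
  assumes "bihom_right_commutative mu \<alpha> \<beta>"
  shows "bihom_right_commutative (\<lambda>x y. mu (\<alpha>' x) (\<beta>' y)) (\<alpha> \<circ> \<alpha>') (\<beta> \<circ> \<beta>')"
  unfolding bihom_right_commutative_def
proof (intro allI)
  fix x y z
  show "mu (\<alpha>' (mu (\<alpha>' x) (\<beta>' ((\<beta> \<circ> \<beta>') y)))) (\<beta>' ((\<alpha> \<circ> \<alpha>') ((\<beta> \<circ> \<beta>') z))) =
        mu (\<alpha>' (mu (\<alpha>' x) (\<beta>' ((\<beta> \<circ> \<beta>') z)))) (\<beta>' ((\<alpha> \<circ> \<alpha>') ((\<beta> \<circ> \<beta>') y)))"
    using assms[unfolded bihom_right_commutative_def, rule_format,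
        of "\<alpha>' (\<alpha>' x)" "\<alpha>' (\<beta>' (\<beta>' y))" "\<alpha>' (\<beta>' (\<beta>' z))"]
    by (simp add: twist_simps)
qed

end

theorem proposition2p3:
  fixes sc :: "'k::field \<Rightarrow> 'a::ab_group_add \<Rightarrow> 'a"
    and mu :: "'a \<Rightarrow> 'a \<Rightarrow> 'a" and \<alpha> \<beta> \<alpha>' \<beta>' :: "'a \<Rightarrow> 'a"
  assumes "BiHom_Novikov sc mu \<alpha> \<beta>"
    and "BiHom_Novikov_morphism sc mu \<alpha> \<beta> sc mu \<alpha> \<beta> \<alpha>'"
    and "BiHom_Novikov_morphism sc mu \<alpha> \<beta> sc mu \<alpha> \<beta> \<beta>'"
    and "\<alpha> \<circ> \<alpha>' = \<alpha>' \<circ> \<alpha>" and "\<alpha> \<circ> \<beta>' = \<beta>' \<circ> \<alpha>"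
    and "\<beta> \<circ> \<alpha>' = \<alpha>' \<circ> \<beta>" and "\<beta> \<circ> \<beta>' = \<beta>' \<circ> \<beta>"
    and "\<alpha>' \<circ> \<beta>' = \<beta>' \<circ> \<alpha>'" and "\<alpha> \<circ> \<beta> = \<beta> \<circ> \<alpha>"
  shows "BiHom_Novikov sc (\<lambda>x y. mu (\<alpha>' x) (\<beta>' y)) (\<alpha> \<circ> \<alpha>') (\<beta> \<circ> \<beta>')"
proof -
  note comm = assms(4-9)
  from assms(1) have vs: "vector_space sc" and bl: "bilinear_map sc mu"
    and lin: "Vector_Spaces.linear sc sc \<alpha>" "Vector_Spaces.linear sc sc \<beta>"
    and mult: "multiplicative mu \<alpha>" "multiplicative mu \<beta>"
    and left: "bihom_left_symmetric mu \<alpha> \<beta>" and right: "bihom_right_commutative mu \<alpha> \<beta>"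
    by (simp_all add: BiHom_Novikov_iff)
  from assms(2,3) have lin': "Vector_Spaces.linear sc sc \<alpha>'" "Vector_Spaces.linear sc sc \<beta>'"
    and mult': "multiplicative mu \<alpha>'" "multiplicative mu \<beta>'"
    by (simp_all add: BiHom_Novikov_morphism_endo_iff)
  have comm_\<beta>'\<alpha>': "\<beta>' \<circ> \<alpha>' = \<alpha>' \<circ> \<beta>'"
    using comm(5) by (rule sym)
  have "multiplicative (\<lambda>x y. mu (\<alpha>' x) (\<beta>' y)) (\<alpha> \<circ> \<alpha>')"
    using multiplicative_twist[OF mult(1) comm(1,2)] multiplicative_twist[OF mult'(1) refl comm(5)]
    by (rule multiplicative_comp)
  moreover have "multiplicative (\<lambda>x y. mu (\<alpha>' x) (\<beta>' y)) (\<beta> \<circ> \<beta>')"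
    using multiplicative_twist[OF mult(2) comm(3,4)] multiplicative_twist[OF mult'(2) comm_\<beta>'\<alpha>' refl]
    by (rule multiplicative_comp)
  moreover have "(\<alpha> \<circ> \<alpha>') \<circ> (\<beta> \<circ> \<beta>') = (\<beta> \<circ> \<beta>') \<circ> (\<alpha> \<circ> \<alpha>')"
    using comm(6,2,3) comm_\<beta>'\<alpha>' by (rule comp_commute_of_pairwise_commute)
  ultimately show ?thesis
    unfolding BiHom_Novikov_iff
    using vs bilinear_map_twist[OF bl lin'] lin lin'
      bihom_left_symmetric_twist[OF mult' comm left] bihom_right_commutative_twist[OF mult' comm right]
    by (simp add: Vector_Spaces.linear_compose)
qed

end
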